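(* Let $G$ be a finite graph with $n$ vertices such that $\mathrm{Aut}(G)$ is isomorphic to the dihedral group $D_t$ of order $2t$; write its elements as $\pi_{\rho^i}$ and $\pi_{\tau\rho^i}$, $i=0,\dots,t-1$, where $\pi_\rho$ has order $t$, $\pi_\tau^2=\pi_{\rho^0}$ is the identity, $\pi_{\tau}\pi_{\rho^i}=\pi_{\rho^{-i}}\pi_\tau$, and $\pi_{\tau\rho^i}=\pi_\tau\pi_{\rho^i}$. Let $t=\prod_{i=1}^s p_i^{r_i}$ be the prime factorization of $t$ and $P^*=\{\pi_{\rho^{t/p_1}},\dots,\pi_{\rho^{t/p_s}}\}$. Then for every positive integer $k$ and every $i\in\{0,\dots,t-1\}$, $$N_=(\{\pi_{\rho^0},\pi_{\tau\rho^i}\})=\sum_{\{\pi_{\tau\rho^i}\}\subseteq P\subseteq\{\pi_{\tau\rho^i}\}\cup P^*}(-1)^{|P|-1}N_{\ge}(P),$$ and $$L(G,k)=\sum_{P\subseteq P^*}(-1)^{|P|}N_{\ge}(P)-\sum_{i=0}^{t-1}N_=(\{\pi_{\rho^0},\pi_{\tau\rho^i}\}).$$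
   Context: A $k$-labeling of $G$ is a map $\phi:V(G)\to\{1,\dots,k\}$; an automorphism $\pi$ preserves $\phi$ if $\phi(\pi(v))=\phi(v)$ for all $v$; $\phi$ is distinguishing if only the identity preserves it; $L(G,k)$ is the number of distinguishing $k$-labelings. For $P\subseteq\mathrm{Aut}(G)$, $N_{\ge}(P)$ is the number of $k$-labelings preserved by every automorphism in $P$ (so $N_{\ge}(\emptyset)=k^n$), and $N_=(P)$ is the number of $k$-labelings whose set of preserving automorphisms is exactly $P$. *)

theory Defs
  imports Main "HOL-Library.FuncSet" "HOL-Combinatorics.Permutations"
    "HOL-Computational_Algebra.Primes"
begin

definition graph :: "'a set \<Rightarrow> ('a \<times> 'a) set \<Rightarrow> bool" where
  "graph V E \<longleftrightarrow> finite V \<and> E \<subseteq> V \<times> V \<and> sym E \<and> (\<forall>v. (v, v) \<notin> E)"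

definition Aut :: "'a set \<Rightarrow> ('a \<times> 'a) set \<Rightarrow> ('a \<Rightarrow> 'a) set" where
  "Aut V E = {\<pi>. \<pi> permutes V \<and> (\<forall>u\<in>V. \<forall>v\<in>V. (u, v) \<in> E \<longleftrightarrow> (\<pi> u, \<pi> v) \<in> E)}"

definition labelings :: "'a set \<Rightarrow> nat \<Rightarrow> ('a \<Rightarrow> nat) set" where
  "labelings V k = V \<rightarrow>\<^sub>E {1..k}"

definition preserves :: "'a set \<Rightarrow> ('a \<Rightarrow> 'a) \<Rightarrow> ('a \<Rightarrow> nat) \<Rightarrow> bool" where
  "preserves V \<pi> \<phi> \<longleftrightarrow> (\<forall>v\<in>V. \<phi> (\<pi> v) = \<phi> v)"

definition distinguishing :: "'a set \<Rightarrow> ('a \<times> 'a) set \<Rightarrow> ('a \<Rightarrow> nat) \<Rightarrow> bool" where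
  "distinguishing V E \<phi> \<longleftrightarrow> (\<forall>\<pi>\<in>Aut V E. preserves V \<pi> \<phi> \<longrightarrow> \<pi> = id)"

definition L :: "'a set \<Rightarrow> ('a \<times> 'a) set \<Rightarrow> nat \<Rightarrow> nat" where
  "L V E k = card {\<phi> \<in> labelings V k. distinguishing V E \<phi>}"

definition N_ge :: "'a set \<Rightarrow> nat \<Rightarrow> ('a \<Rightarrow> 'a) set \<Rightarrow> nat" where
  "N_ge V k P = card {\<phi> \<in> labelings V k. \<forall>\<pi>\<in>P. preserves V \<pi> \<phi>}"

definition N_eq :: "'a set \<Rightarrow> ('a \<times> 'a) set \<Rightarrow> nat \<Rightarrow> ('a \<Rightarrow> 'a) set \<Rightarrow> nat" where
  "N_eq V E k P = card {\<phi> \<in> labelings V k. {\<pi> \<in> Aut V E. preserves V \<pi> \<phi>} = P}"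

end

theory Submission
  imports Defs
begin

text \<open>The stabilizer of a labeling is a subgroup of the dihedral group. Its rotations form a
  subgroup of the cyclic group of order t, which is nontrivial iff it contains one of the rotations
  \<rho>^(t/p) in P*. A subgroup without nontrivial rotations is either trivial or {id, \<tau>\<rho>^i}, because
  the product of two distinct reflections is a nontrivial rotation. Hence the labelings preserved
  by no element of P* are exactly the distinguishing ones together with those whose stabilizer is
  some {id, \<tau>\<rho>^i}, and both formulas follow from inclusion-exclusion over P*.\<close>

lemma card_avoiding_inclusion_exclusion:
  assumes "finite A" "finite S"
  shows "int (card {x\<in>A. \<forall>q\<in>S. \<not> R q x}) =
    (\<Sum>Q\<in>Pow S. (-1) ^ card Q * int (card {x\<in>A. \<forall>q\<in>Q. R q x}))"
proof -
  define X where "X q = {x\<in>A. R q x}" for q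
  \<comment> \<open>Intersecting with A makes the cardinality additive on all disjoint sets, as
    \<open>Incl_Excl_UN\<close> demands.\<close>
  define f where "f B = int (card (B \<inter> A))" for B
  have additive: "f (B \<union> C) = f B + f C" if "disjnt B C" for B C
  proof -
    have "(B \<union> C) \<inter> A = B \<inter> A \<union> C \<inter> A" by blast
    moreover have "B \<inter> A \<inter> (C \<inter> A) = {}"
      using that by (auto simp: disjnt_def)
    ultimately show ?thesis
      unfolding f_def using assms(1) by (simp add: card_Un_disjoint)
  qed
  have "int (card (\<Union>(X ` S))) = (\<Sum>Q | Q \<subseteq> S \<and> Q \<noteq> {}. (-1) ^ (card Q + 1) * f (\<Inter>(X ` Q)))"
    using Incl_Excl_UN[of f S X, OF additive assms(2)] by (simp add: f_def X_def Int_absorb2 subset_iff)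
  also have "\<dots> = - (\<Sum>Q | Q \<subseteq> S \<and> Q \<noteq> {}. (-1) ^ card Q * int (card {x\<in>A. \<forall>q\<in>Q. R q x}))"
    (is "_ = - ?nonempty")
    by (auto simp: sum_negf f_def X_def intro!: sum.cong arg_cong[where f = card])
  finally have union: "int (card (\<Union>(X ` S))) = - ?nonempty" .
  have sub: "\<Union>(X ` S) \<subseteq> A" by (auto simp: X_def)
  have "{x\<in>A. \<forall>q\<in>S. \<not> R q x} = A - \<Union>(X ` S)" by (auto simp: X_def)
  then have "int (card {x\<in>A. \<forall>q\<in>S. \<not> R q x}) = int (card A) - int (card (\<Union>(X ` S)))"
    using assms(1) sub by (simp add: card_Diff_subset card_mono finite_subset of_nat_diff)
  moreover have "Pow S = insert {} {Q. Q \<subseteq> S \<and> Q \<noteq> {}}" by auto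
  ultimately show ?thesis
    using union assms(2) by simp
qed

lemma finite_labelings: "finite V \<Longrightarrow> finite (labelings V k)"
  by (simp add: labelings_def finite_PiE)

lemma int_card_labelings_avoiding:
  assumes "finite V" "finite S"
  shows "int (card {\<phi> \<in> labelings V k. \<forall>q\<in>S. \<not> preserves V q \<phi>}) =
    (\<Sum>P\<in>Pow S. (-1) ^ card P * int (N_ge V k P))"
  unfolding N_ge_def using assms by (simp add: card_avoiding_inclusion_exclusion finite_labelings)

lemma int_card_labelings_preserving_avoiding:
  assumes "finite V" "finite S" "a \<notin> S"
  shows "int (card {\<phi> \<in> labelings V k. preserves V a \<phi> \<and> (\<forall>q\<in>S. \<not> preserves V q \<phi>)}) =
    (\<Sum>P\<in>{P. {a} \<subseteq> P \<and> P \<subseteq> {a} \<union> S}. (-1) ^ (card P - 1) * int (N_ge V k P))"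
proof -
  define A where "A = {\<phi> \<in> labelings V k. preserves V a \<phi>}"
  have "{\<phi> \<in> labelings V k. preserves V a \<phi> \<and> (\<forall>q\<in>S. \<not> preserves V q \<phi>)} =
      {\<phi> \<in> A. \<forall>q\<in>S. \<not> preserves V q \<phi>}"
    by (auto simp: A_def)
  moreover have "finite A" using assms(1) by (simp add: A_def finite_labelings)
  ultimately have "int (card {\<phi> \<in> labelings V k. preserves V a \<phi> \<and> (\<forall>q\<in>S. \<not> preserves V q \<phi>)}) =
      (\<Sum>Q\<in>Pow S. (-1) ^ card Q * int (card {\<phi> \<in> A. \<forall>q\<in>Q. preserves V q \<phi>}))"
    using assms(2) by (simp add: card_avoiding_inclusion_exclusion)
  also have "\<dots> = (\<Sum>Q\<in>Pow S. (-1) ^ (card (insert a Q) - 1) * int (N_ge V k (insert a Q)))"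
  proof (rule sum.cong)
    fix Q assume "Q \<in> Pow S"
    then have "finite Q" "a \<notin> Q" using assms finite_subset by auto
    then show "(-1) ^ card Q * int (card {\<phi> \<in> A. \<forall>q\<in>Q. preserves V q \<phi>}) =
        (-1) ^ (card (insert a Q) - 1) * int (N_ge V k (insert a Q))"
      by (simp add: N_ge_def A_def conj_assoc)
  qed simp
  also have "\<dots> = (\<Sum>P\<in>insert a ` Pow S. (-1) ^ (card P - 1) * int (N_ge V k P))"
    using assms(3) by (subst sum.reindex) (auto simp: inj_on_def)
  also have "insert a ` Pow S = {P. {a} \<subseteq> P \<and> P \<subseteq> {a} \<union> S}"
  proof (intro equalityI subsetI)
    fix P assume "P \<in> {P. {a} \<subseteq> P \<and> P \<subseteq> {a} \<union> S}"
    then have "P = insert a (P - {a})" "P - {a} \<in> Pow S" by auto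
    then show "P \<in> insert a ` Pow S" by blast
  qed auto
  finally show ?thesis .
qed

lemma preserves_comp:
  "preserves V f \<phi> \<Longrightarrow> preserves V g \<phi> \<Longrightarrow> g ` V \<subseteq> V \<Longrightarrow> preserves V (f \<circ> g) \<phi>"
  by (auto simp: preserves_def)

lemma funpow_image_subset: "f ` V \<subseteq> V \<Longrightarrow> (f ^^ n) ` V \<subseteq> V"
  by (induction n) auto

lemma preserves_funpow:
  assumes "preserves V f \<phi>" "f ` V \<subseteq> V"
  shows "preserves V (f ^^ n) \<phi>"
proof (induction n)
  case (Suc n)
  then show ?case
    unfolding funpow_Suc_right using assms by (rule preserves_comp)
qed (simp add: preserves_def)

lemma dvd_period_diff_imp_eq:
  fixes t i j :: nat
  assumes "t dvd t - i + j" "i < t" "j < t"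
  shows "i = j"
proof (cases "i \<le> j")
  case True
  then have "t - i + j = t + (j - i)"
    using assms(2) by linarith
  then have "t dvd j - i"
    using assms(1) by (metis dvd_add_right_iff dvd_refl)
  moreover have "j - i < t"
    using assms(3) by linarith
  ultimately show ?thesis
    using True nat_dvd_not_less[of "j - i" t] by linarith
next
  case False
  then show ?thesis
    using assms nat_dvd_not_less[of "t - i + j" t] by linarith
qed

lemma funpow_mult_period: "f ^^ t = id \<Longrightarrow> f ^^ (t * y + d) = f ^^ d"
  by (simp add: funpow_add funpow_mult[symmetric])

lemma preserves_funpow_gcd:
  assumes "f ^^ t = id" "f ` V \<subseteq> V" "preserves V (f ^^ m) \<phi>" "m \<noteq> 0"
  shows "preserves V (f ^^ gcd m t) \<phi>"
proof -
  obtain x y where bezout: "m * x = t * y + gcd m t"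
    using bezout_nat[OF assms(4)] by blast
  have "preserves V ((f ^^ m) ^^ x) \<phi>"
    using assms(2,3) by (simp add: preserves_funpow funpow_image_subset)
  then show ?thesis
    by (simp add: funpow_mult bezout funpow_mult_period[OF assms(1)])
qed

text \<open>By Bezout the labeling is preserved by f ^^ gcd m t, and every proper divisor of t
  divides t div p for some prime factor p of t.\<close>
lemma preserves_funpow_prime_divisor:
  assumes "f ^^ t = id" "0 < t" "f ` V \<subseteq> V" "preserves V (f ^^ m) \<phi>" "\<not> t dvd m"
  shows "\<exists>p\<in>prime_factors t. preserves V (f ^^ (t div p)) \<phi>"
proof -
  define d where "d = gcd m t"
  have "m \<noteq> 0" using assms(5) by (metis dvd_0_right)
  then have preserved: "preserves V (f ^^ d) \<phi>"
    unfolding d_def by (rule preserves_funpow_gcd[OF assms(1,3,4)])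
  obtain e where e: "t = d * e" unfolding d_def by (metis gcd_dvd2 dvdE)
  have "e \<noteq> 1" using e assms(5) unfolding d_def by (metis gcd_dvd1 mult.right_neutral)
  then obtain p where p: "prime p" "p dvd e" using prime_factor_nat by blast
  then obtain c where c: "e = p * c" by blast
  have "p \<in> prime_factors t" using p e assms(2) by (auto simp: in_prime_factors_iff)
  moreover have "t div p = d * c" using e c p by (simp add: prime_gt_0_nat)
  then have "preserves V (f ^^ (t div p)) \<phi>"
    using preserved assms(3) by (simp add: funpow_mult[symmetric] preserves_funpow funpow_image_subset)
  ultimately show ?thesis by blast
qed

lemma card_eq_sum_card_fibers:
  assumes "finite A" "finite F"
  shows "card {x \<in> A. g x \<in> F} = (\<Sum>y\<in>F. card {x \<in> A. g x = y})"
proof -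
  have "card {x \<in> A. g x \<in> F} = card (\<Union>y\<in>F. {x \<in> A. g x = y})"
    by (rule arg_cong[where f = card]) auto
  also have "\<dots> = (\<Sum>y\<in>F. card {x \<in> A. g x = y})"
    using assms by (intro card_UN_disjoint) auto
  finally show ?thesis .
qed

lemma id_in_Aut: "id \<in> Aut V E"
  by (simp add: Aut_def)

lemma Aut_image_subset: "\<pi> \<in> Aut V E \<Longrightarrow> \<pi> ` V \<subseteq> V"
  by (auto simp: Aut_def permutes_in_image)

definition stabilizer :: "'a set \<Rightarrow> ('a \<times> 'a) set \<Rightarrow> ('a \<Rightarrow> nat) \<Rightarrow> ('a \<Rightarrow> 'a) set" where
  "stabilizer V E \<phi> = {\<pi> \<in> Aut V E. preserves V \<pi> \<phi>}"

lemma distinguishing_iff_stabilizer: "distinguishing V E \<phi> \<longleftrightarrow> stabilizer V E \<phi> = {id}"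
  by (auto simp: distinguishing_def stabilizer_def id_in_Aut preserves_def)

locale dihedral_graph =
  fixes V :: "'a set" and E :: "('a \<times> 'a) set" and \<rho> \<tau> :: "'a \<Rightarrow> 'a" and t :: nat
  assumes graph: "graph V E"
    and t_ge_1: "t \<ge> 1"
    and Aut_eq: "Aut V E = {\<rho> ^^ i | i. i < t} \<union> {\<tau> \<circ> (\<rho> ^^ i) | i. i < t}"
    and card_Aut: "card (Aut V E) = 2 * t"
    and rho_order: "\<rho> ^^ t = id" "\<forall>j. 0 < j \<and> j < t \<longrightarrow> \<rho> ^^ j \<noteq> id"
    and tau_involution: "\<tau> \<circ> \<tau> = id"
    and tau_rho: "\<forall>i<t. \<tau> \<circ> (\<rho> ^^ i) = (\<rho> ^^ (t - i)) \<circ> \<tau>"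
begin

abbreviation reflection :: "nat \<Rightarrow> 'a \<Rightarrow> 'a" where
  "reflection i \<equiv> \<tau> \<circ> \<rho> ^^ i"

abbreviation prime_rotations :: "('a \<Rightarrow> 'a) set" where
  "prime_rotations \<equiv> (\<lambda>p. \<rho> ^^ (t div p)) ` prime_factors t"

abbreviation avoids_prime_rotations :: "('a \<Rightarrow> nat) \<Rightarrow> bool" where
  "avoids_prime_rotations \<phi> \<equiv> \<forall>q\<in>prime_rotations. \<not> preserves V q \<phi>"

lemma finite_vertices: "finite V"
  using graph by (simp add: graph_def)

lemma Aut_eq_images: "Aut V E = (\<lambda>j. \<rho> ^^ j) ` {..<t} \<union> reflection ` {..<t}"
  unfolding Aut_eq by auto

lemma rotation_eq_mod: "\<rho> ^^ j = \<rho> ^^ (j mod t)"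
  using funpow_mult_period[OF rho_order(1), of "j div t" "j mod t"] by simp

lemma rotation_in_Aut: "\<rho> ^^ j \<in> Aut V E"
  using t_ge_1 by (subst rotation_eq_mod) (simp add: Aut_eq_images)

lemma reflection_in_Aut: "i < t \<Longrightarrow> reflection i \<in> Aut V E"
  by (simp add: Aut_eq_images)

lemma rho_image_subset: "\<rho> ` V \<subseteq> V"
  using Aut_image_subset[OF rotation_in_Aut[of 1]] by simp

text \<open>The cardinality hypothesis is what makes the listed rotations and reflections distinct.\<close>
lemma
  shows inj_on_reflections: "inj_on reflection {..<t}"
    and rotations_disjoint_reflections: "(\<lambda>j. \<rho> ^^ j) ` {..<t} \<inter> reflection ` {..<t} = {}"
proof -
  let ?R = "(\<lambda>j. \<rho> ^^ j) ` {..<t}" and ?T = "reflection ` {..<t}"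
  have "card ?R \<le> t" "card ?T \<le> t"
    using card_image_le[of "{..<t}"] by auto
  moreover have "card (?R \<union> ?T) + card (?R \<inter> ?T) = card ?R + card ?T"
    by (rule card_Un_Int[symmetric]) auto
  ultimately have "card ?T = t" "card (?R \<inter> ?T) = 0"
    using card_Aut unfolding Aut_eq_images by linarith+
  then show "inj_on reflection {..<t}" "?R \<inter> ?T = {}"
    by (auto intro: eq_card_imp_inj_on)
qed

lemma reflection_neq_rotation:
  assumes "i < t"
  shows "reflection i \<noteq> \<rho> ^^ j"
proof
  assume "reflection i = \<rho> ^^ j"
  then have "reflection i = \<rho> ^^ (j mod t)"
    using rotation_eq_mod[of j] by simp
  moreover have "j mod t < t"
    using t_ge_1 by simp
  ultimately show False
    using rotations_disjoint_reflections assms by blast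
qed

lemma prime_rotation_nontrivial:
  assumes "q \<in> prime_rotations"
  obtains j where "0 < j" "j < t" "q = \<rho> ^^ j"
proof -
  obtain p where p: "prime p" "p dvd t" "q = \<rho> ^^ (t div p)"
    using assms by auto
  then have "0 < t div p" "t div p < t"
    using t_ge_1 prime_gt_1_nat by (auto simp: dvd_imp_le div_less_dividend nat_dvd_not_less)
  with p show thesis using that by blast
qed

lemma reflection_comp_reflection:
  assumes "i < t"
  shows "reflection i \<circ> reflection j = \<rho> ^^ (t - i + j)"
proof -
  have "reflection i \<circ> reflection j = \<tau> \<circ> \<rho> ^^ i \<circ> \<tau> \<circ> \<rho> ^^ j"
    by (simp add: comp_assoc)
  also have "\<dots> = \<rho> ^^ (t - i) \<circ> (\<tau> \<circ> \<tau>) \<circ> \<rho> ^^ j"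
    using tau_rho assms by (simp add: comp_assoc)
  finally show ?thesis
    by (simp add: tau_involution funpow_add)
qed

lemma dvd_if_avoids_prime_rotations:
  "avoids_prime_rotations \<phi> \<Longrightarrow> preserves V (\<rho> ^^ m) \<phi> \<Longrightarrow> t dvd m"
  using preserves_funpow_prime_divisor[OF rho_order(1) _ rho_image_subset] t_ge_1 by fastforce

lemma preserved_reflection_unique:
  assumes "avoids_prime_rotations \<phi>" "i < t" "j < t"
    and "preserves V (reflection i) \<phi>" "preserves V (reflection j) \<phi>"
  shows "i = j"
proof -
  have "preserves V (\<rho> ^^ (t - i + j)) \<phi>"
    using preserves_comp[OF assms(4,5) Aut_image_subset[OF reflection_in_Aut[OF assms(3)]]]
    by (simp add: reflection_comp_reflection assms(2))
  then have "t dvd t - i + j"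
    by (rule dvd_if_avoids_prime_rotations[OF assms(1)])
  then show ?thesis
    using assms(2,3) by (rule dvd_period_diff_imp_eq)
qed

lemma stabilizer_if_avoids_prime_rotations:
  assumes "avoids_prime_rotations \<phi>"
  shows "stabilizer V E \<phi> = insert id {reflection i | i. i < t \<and> preserves V (reflection i) \<phi>}"
proof (intro equalityI subsetI)
  fix \<pi> assume \<pi>: "\<pi> \<in> stabilizer V E \<phi>"
  then have preserved: "preserves V \<pi> \<phi>"
    by (simp add: stabilizer_def)
  obtain j where j: "j < t" "\<pi> = \<rho> ^^ j \<or> \<pi> = reflection j"
    using \<pi> by (auto simp: stabilizer_def Aut_eq_images)
  show "\<pi> \<in> insert id {reflection i | i. i < t \<and> preserves V (reflection i) \<phi>}"
  proof (cases "\<pi> = \<rho> ^^ j")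
    case True
    then have "t dvd j"
      using preserved by (simp add: dvd_if_avoids_prime_rotations[OF assms])
    then have "j = 0"
      using j(1) nat_dvd_not_less by blast
    then show ?thesis using True by simp
  next
    case False
    then show ?thesis using j preserved by auto
  qed
qed (auto simp: stabilizer_def id_in_Aut reflection_in_Aut preserves_def)

lemma avoids_prime_rotations_if_stabilizer_subset:
  assumes "stabilizer V E \<phi> \<subseteq> insert id (reflection ` {..<t})"
  shows "avoids_prime_rotations \<phi>"
proof
  fix q assume q: "q \<in> prime_rotations"
  then obtain j where j: "0 < j" "j < t" "q = \<rho> ^^ j"
    by (rule prime_rotation_nontrivial)
  have "q \<noteq> id"
    using rho_order(2) j by simp
  moreover have "q \<noteq> reflection i" if "i < t" for i
    using reflection_neq_rotation[OF that, of j] j(3) by simp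
  ultimately have "q \<notin> insert id (reflection ` {..<t})"
    by blast
  then show "\<not> preserves V q \<phi>"
    using assms j rotation_in_Aut by (auto simp: stabilizer_def)
qed

lemma stabilizer_eq_reflection_iff:
  assumes "i < t"
  shows "stabilizer V E \<phi> = {id, reflection i} \<longleftrightarrow>
    preserves V (reflection i) \<phi> \<and> avoids_prime_rotations \<phi>"
proof
  assume stab: "stabilizer V E \<phi> = {id, reflection i}"
  then have "stabilizer V E \<phi> \<subseteq> insert id (reflection ` {..<t})"
    using assms by blast
  then have "avoids_prime_rotations \<phi>"
    by (rule avoids_prime_rotations_if_stabilizer_subset)
  moreover have "reflection i \<in> stabilizer V E \<phi>"
    using stab by simp
  ultimately show "preserves V (reflection i) \<phi> \<and> avoids_prime_rotations \<phi>"
    by (simp add: stabilizer_def)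
next
  assume "preserves V (reflection i) \<phi> \<and> avoids_prime_rotations \<phi>"
  then have preserved: "preserves V (reflection i) \<phi>" and avoids: "avoids_prime_rotations \<phi>"
    by blast+
  have "{reflection j | j. j < t \<and> preserves V (reflection j) \<phi>} = {reflection i}"
    using preserved_reflection_unique[OF avoids _ assms _ preserved] assms preserved by blast
  then show "stabilizer V E \<phi> = {id, reflection i}"
    by (simp add: stabilizer_if_avoids_prime_rotations[OF avoids])
qed

lemma avoids_prime_rotations_iff_stabilizer:
  "avoids_prime_rotations \<phi> \<longleftrightarrow>
    stabilizer V E \<phi> \<in> insert {id} ((\<lambda>i. {id, reflection i}) ` {..<t})"
proof
  assume avoids: "avoids_prime_rotations \<phi>"
  show "stabilizer V E \<phi> \<in> insert {id} ((\<lambda>i. {id, reflection i}) ` {..<t})"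
  proof (cases "\<exists>i<t. preserves V (reflection i) \<phi>")
    case True
    then obtain i where "i < t" "preserves V (reflection i) \<phi>"
      by blast
    then have "stabilizer V E \<phi> = {id, reflection i}"
      using avoids by (simp add: stabilizer_eq_reflection_iff)
    then show ?thesis
      using \<open>i < t\<close> by blast
  next
    case False
    then show ?thesis using stabilizer_if_avoids_prime_rotations[OF avoids] by auto
  qed
next
  assume "stabilizer V E \<phi> \<in> insert {id} ((\<lambda>i. {id, reflection i}) ` {..<t})"
  then have "stabilizer V E \<phi> \<subseteq> insert id (reflection ` {..<t})"
    by auto
  then show "avoids_prime_rotations \<phi>"
    by (rule avoids_prime_rotations_if_stabilizer_subset)
qed

lemma reflection_notin_prime_rotations: "i < t \<Longrightarrow> reflection i \<notin> prime_rotations"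
  using reflection_neq_rotation by blast

lemma N_eq_reflection:
  assumes "i < t"
  shows "N_eq V E k {id, reflection i} =
    card {\<phi> \<in> labelings V k. preserves V (reflection i) \<phi> \<and> avoids_prime_rotations \<phi>}"
  using stabilizer_eq_reflection_iff[OF assms] by (simp add: N_eq_def flip: stabilizer_def)

lemma card_labelings_avoiding_prime_rotations:
  "card {\<phi> \<in> labelings V k. avoids_prime_rotations \<phi>} =
    L V E k + (\<Sum>i<t. N_eq V E k {id, reflection i})"
proof -
  let ?Lab = "labelings V k" and ?F = "insert {id} ((\<lambda>i. {id, reflection i}) ` {..<t})"
  have fibers: "card {\<phi> \<in> ?Lab. stabilizer V E \<phi> \<in> ?F} =
      (\<Sum>X\<in>?F. card {\<phi> \<in> ?Lab. stabilizer V E \<phi> = X})"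
    by (rule card_eq_sum_card_fibers) (simp_all add: finite_labelings finite_vertices)
  have "inj_on (\<lambda>i. {id, reflection i}) {..<t}"
  proof (rule inj_onI)
    fix i j assume ij: "i \<in> {..<t}" "j \<in> {..<t}" and eq: "{id, reflection i} = {id, reflection j}"
    have "reflection i \<noteq> id"
      using reflection_neq_rotation[of i 0] ij by simp
    then have "reflection i = reflection j"
      using eq by (auto simp: doubleton_eq_iff)
    then show "i = j"
      using inj_on_reflections ij by (auto dest: inj_onD)
  qed
  moreover have "{id} \<notin> (\<lambda>i. {id, reflection i}) ` {..<t}"
    using reflection_neq_rotation[of _ 0] by auto
  ultimately have "card {\<phi> \<in> ?Lab. avoids_prime_rotations \<phi>} =
      card {\<phi> \<in> ?Lab. stabilizer V E \<phi> = {id}} +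
      (\<Sum>i<t. card {\<phi> \<in> ?Lab. stabilizer V E \<phi> = {id, reflection i}})"
    unfolding avoids_prime_rotations_iff_stabilizer fibers by (simp add: sum.reindex)
  then show ?thesis
    by (simp add: L_def N_eq_def distinguishing_iff_stabilizer stabilizer_def)
qed

end

theorem theorem3:
  fixes V :: "'a set" and E :: "('a \<times> 'a) set" and \<rho> \<tau> :: "'a \<Rightarrow> 'a" and t :: nat
  assumes "graph V E"
    and "t \<ge> 1"
    and Aut_eq: "Aut V E = {\<rho> ^^ i | i. i < t} \<union> {\<tau> \<circ> (\<rho> ^^ i) | i. i < t}"
    and card_Aut: "card (Aut V E) = 2 * t"
    and ord_rho: "\<rho> ^^ t = id" "\<forall>j. 0 < j \<and> j < t \<longrightarrow> \<rho> ^^ j \<noteq> id"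
    and tau_inv: "\<tau> \<circ> \<tau> = id"
    and rel: "\<forall>i<t. \<tau> \<circ> (\<rho> ^^ i) = (\<rho> ^^ (t - i)) \<circ> \<tau>"
  defines "Pstar \<equiv> (\<lambda>p. \<rho> ^^ (t div p)) ` prime_factors t"
  shows "\<forall>k>0. (\<forall>i<t.
            int (N_eq V E k {id, \<tau> \<circ> (\<rho> ^^ i)}) =
              (\<Sum>P \<in> {P. {\<tau> \<circ> (\<rho> ^^ i)} \<subseteq> P \<and> P \<subseteq> {\<tau> \<circ> (\<rho> ^^ i)} \<union> Pstar}.
                 (-1) ^ (card P - 1) * int (N_ge V k P)))
        \<and> int (L V E k) =
            (\<Sum>P \<in> Pow Pstar. (-1) ^ card P * int (N_ge V k P))
            - (\<Sum>i<t. int (N_eq V E k {id, \<tau> \<circ> (\<rho> ^^ i)}))"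
proof -
  interpret dihedral_graph V E \<rho> \<tau> t
    using assms(1-8) by unfold_locales
  have "finite Pstar"
    by (simp add: Pstar_def)
  \<comment> \<open>Both identities hold for every k.\<close>
  have "int (N_eq V E k {id, \<tau> \<circ> (\<rho> ^^ i)}) =
      (\<Sum>P \<in> {P. {\<tau> \<circ> (\<rho> ^^ i)} \<subseteq> P \<and> P \<subseteq> {\<tau> \<circ> (\<rho> ^^ i)} \<union> Pstar}.
        (-1) ^ (card P - 1) * int (N_ge V k P))" if "i < t" for k i
    using int_card_labelings_preserving_avoiding[OF finite_vertices \<open>finite Pstar\<close>, of "reflection i" k]
      reflection_notin_prime_rotations[OF that] N_eq_reflection[OF that, of k]
    by (simp add: Pstar_def)
  moreover have "int (L V E k) =
      (\<Sum>P \<in> Pow Pstar. (-1) ^ card P * int (N_ge V k P))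
      - (\<Sum>i<t. int (N_eq V E k {id, \<tau> \<circ> (\<rho> ^^ i)}))" for k
    using int_card_labelings_avoiding[OF finite_vertices \<open>finite Pstar\<close>, of k]
      card_labelings_avoiding_prime_rotations[of k]
    by (simp add: Pstar_def)
  ultimately show ?thesis
    by blast
qed

end
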